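(* Let $n,b$ be integers with $1<n<b$, and let $\Gamma$ be the $(n,b)$-Hoey-Sloane graph. If $(c_1,c_2)$ is an edge of $\Gamma$ with edge label $(d_1,d_2)$, then $(n-1-c_1,\,n-1-c_2)$ is also an edge of $\Gamma$, and $(b-1-d_1,\,b-1-d_2)$ is one of its edge labels.
   Context: Let $\lambda(x)$ denote the least non-negative residue of $x$ modulo $b$. The $(n,b)$-mother graph $M$ is the directed graph on vertex set $\{0,\ldots,b-1\}$ whose edges are the ordered pairs of digits $(d_1,d_2)$ with $\lambda(d_1+(b-n)d_2)\le n-1$. The $(n,b)$-Hoey-Sloane graph $\Gamma$ is the edge-labelled directed graph with vertex set (states) $\{0,1,\ldots,n-1\}$ in which, for states $c_1,c_2$, the pair $(c_1,c_2)$ is an edge precisely when the set $\{(d_1,d_2)\text{ an edge of }M \mid n d_2-d_1+c_1=b\,c_2\}$ is nonempty; this set is the collection of edge labels of $(c_1,c_2)$. (An input $(d_1,d_2)$ thus encodes one step of multiplying a number by $n$ in base $b$: multiplicand digit $d_2$, incoming carry $c_1$, product digit $d_1$, outgoing carry $c_2$.) *)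

theory Defs
  imports Main
begin

definition lam :: "int \<Rightarrow> int \<Rightarrow> int" where
  "lam b x = x mod b"

definition mother_edge :: "int \<Rightarrow> int \<Rightarrow> int \<Rightarrow> int \<Rightarrow> bool" where
  "mother_edge n b d1 d2 \<longleftrightarrow>
     d1 \<in> {0..b-1} \<and> d2 \<in> {0..b-1} \<and> lam b (d1 + (b - n) * d2) \<le> n - 1"

definition hs_labels :: "int \<Rightarrow> int \<Rightarrow> int \<Rightarrow> int \<Rightarrow> (int \<times> int) set" where
  "hs_labels n b c1 c2 =
     {(d1, d2). mother_edge n b d1 d2 \<and> n * d2 - d1 + c1 = b * c2}"

definition hs_edge :: "int \<Rightarrow> int \<Rightarrow> int \<Rightarrow> int \<Rightarrow> bool" where
  "hs_edge n b c1 c2 \<longleftrightarrow>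
     c1 \<in> {0..n-1} \<and> c2 \<in> {0..n-1} \<and> hs_labels n b c1 c2 \<noteq> {}"

end

theory Submission
  imports Defs
begin

(* Complementing digits d \<mapsto> b - 1 - d and carries c \<mapsto> n - 1 - c is an
   involution of the Hoey-Sloane graph: both sides of the carry equation
   n d2 - d1 + c1 = b c2 change by the same amount, and the residue
   \<lambda>(d1 + (b - n) d2), which lies in {0..n-1}, is sent to n - 1 minus itself. *)

lemma mod_diff_complement:
  fixes x m b :: int
  assumes "0 < b" and "m < b" and "x mod b \<le> m"
  shows "(m - x) mod b = m - x mod b"
proof -
  have split: "m - x = (m - x mod b) + b * (- (x div b))"
    using div_mult_mod_eq[of x b] by (simp add: algebra_simps)
  have "0 \<le> m - x mod b" and "m - x mod b < b"
    using assms pos_mod_sign[of b x] by linarith+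
  then show ?thesis
    unfolding split by (simp only: mod_mult_self2 mod_pos_pos_trivial)
qed

lemma mother_edge_complement:
  fixes n b d1 d2 :: int
  assumes "n \<le> b" and "mother_edge n b d1 d2"
  shows "mother_edge n b (b - 1 - d1) (b - 1 - d2)"
proof -
  define x where "x = d1 + (b - n) * d2"
  have "0 < b" and x_mod: "x mod b \<le> n - 1"
    using assms unfolding mother_edge_def lam_def x_def by auto
  have split: "b - 1 - d1 + (b - n) * (b - 1 - d2) = (n - 1 - x) + b * (b - n)"
    unfolding x_def by (simp add: algebra_simps)
  have "lam b (b - 1 - d1 + (b - n) * (b - 1 - d2)) = n - 1 - x mod b"
    unfolding lam_def split mod_mult_self2
    using mod_diff_complement[OF \<open>0 < b\<close> _ x_mod] assms(1) by simp
  then have "lam b (b - 1 - d1 + (b - n) * (b - 1 - d2)) \<le> n - 1"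
    using pos_mod_sign[OF \<open>0 < b\<close>, of x] by linarith
  then show ?thesis
    using assms(2) unfolding mother_edge_def by auto
qed

lemma hs_labels_complement:
  fixes n b c1 c2 d1 d2 :: int
  assumes "n \<le> b" and "(d1, d2) \<in> hs_labels n b c1 c2"
  shows "(b - 1 - d1, b - 1 - d2) \<in> hs_labels n b (n - 1 - c1) (n - 1 - c2)"
proof -
  have edge: "mother_edge n b d1 d2" and carry: "n * d2 - d1 + c1 = b * c2"
    using assms(2) unfolding hs_labels_def by auto
  have "n * (b - 1 - d2) - (b - 1 - d1) + (n - 1 - c1) = b * (n - 1 - c2)"
    using carry by (simp add: algebra_simps)
  then show ?thesis
    using mother_edge_complement[OF assms(1) edge] unfolding hs_labels_def by simp
qed

lemma hs_edge_complement:
  fixes n b c1 c2 :: int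
  assumes "n \<le> b" and "hs_edge n b c1 c2"
  shows "hs_edge n b (n - 1 - c1) (n - 1 - c2)"
proof -
  obtain d1 d2 where "(d1, d2) \<in> hs_labels n b c1 c2"
    using assms(2) unfolding hs_edge_def by auto
  then have "hs_labels n b (n - 1 - c1) (n - 1 - c2) \<noteq> {}"
    using hs_labels_complement[OF assms(1)] by blast
  then show ?thesis
    using assms(2) unfolding hs_edge_def by auto
qed

theorem theorem11:
  fixes n b c1 c2 d1 d2 :: int
  assumes "1 < n" and "n < b"
    and "hs_edge n b c1 c2"
    and "(d1, d2) \<in> hs_labels n b c1 c2"
  shows "hs_edge n b (n - 1 - c1) (n - 1 - c2)
       \<and> (b - 1 - d1, b - 1 - d2) \<in> hs_labels n b (n - 1 - c1) (n - 1 - c2)"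
proof -
  have "n \<le> b"
    using assms(2) by simp
  then show ?thesis
    using hs_edge_complement[OF _ assms(3)] hs_labels_complement[OF _ assms(4)] by blast
qed

end
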